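(* Let $W$ be a balanced tetrahedral erasure channel with $Q(W)\le 2$. Then $Q(W^{s})\le 2$ and $Q(W^{p})\le 2$.
   Context: $\mathrm{TEC}(p,q,r,s,t)$ denotes a tetrahedral erasure channel with parameters $p,q,r,s,t\ge0$ summing to $1$. Its entropy is $H=\frac{q+r+s}{2}+t$, its edge mass is $E=q+r+s$, and its Quetelet index is $Q=E/(H(1-H))$ (defined when $0<H<1$). It is balanced if $q=r=s$. For $W=\mathrm{TEC}(p,q,r,s,t)$, the serial child is $W^{s}=\mathrm{TEC}(p^2,\ ps+sq+qp,\ pq+qr+rp,\ pr+rs+sp,\ 1-\text{(sum of the other four)})$ and the parallel child is $W^{p}=\mathrm{TEC}(1-\text{(sum of the other four)},\ ts+sq+qt,\ tq+qr+rt,\ tr+rs+st,\ t^2)$. *)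

theory Defs
  imports Complex_Main
begin

type_synonym tec = "real \<times> real \<times> real \<times> real \<times> real"

definition is_TEC :: "tec \<Rightarrow> bool" where
  "is_TEC W = (case W of (p,q,r,s,t) \<Rightarrow>
     p \<ge> 0 \<and> q \<ge> 0 \<and> r \<ge> 0 \<and> s \<ge> 0 \<and> t \<ge> 0 \<and> p + q + r + s + t = 1)"

definition tec_entropy :: "tec \<Rightarrow> real" where
  "tec_entropy W = (case W of (p,q,r,s,t) \<Rightarrow> (q + r + s) / 2 + t)"

definition tec_edge_mass :: "tec \<Rightarrow> real" where
  "tec_edge_mass W = (case W of (p,q,r,s,t) \<Rightarrow> q + r + s)"

definition quetelet :: "tec \<Rightarrow> real" where
  "quetelet W = tec_edge_mass W / (tec_entropy W * (1 - tec_entropy W))"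

definition balanced :: "tec \<Rightarrow> bool" where
  "balanced W = (case W of (p,q,r,s,t) \<Rightarrow> q = r \<and> r = s)"

definition serial_child :: "tec \<Rightarrow> tec" where
  "serial_child W = (case W of (p,q,r,s,t) \<Rightarrow>
     (let a = p^2; b = p*s + s*q + q*p; c = p*q + q*r + r*p; d = p*r + r*s + s*p
      in (a, b, c, d, 1 - (a + b + c + d))))"

definition parallel_child :: "tec \<Rightarrow> tec" where
  "parallel_child W = (case W of (p,q,r,s,t) \<Rightarrow>
     (let b = t*s + s*q + q*t; c = t*q + q*r + r*t; d = t*r + r*s + s*t; e = t^2
      in (1 - (b + c + d + e), b, c, d, e)))"

end

theory Submission
  imports Defs
begin

text \<open>For a balanced channel \<open>(p,q,q,q,t)\<close> with \<open>p + 3q + t = 1\<close> one has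
  \<open>2H(1 - H) - E = 2pt - 9q\<^sup>2/2\<close>, so \<open>Q \<le> 2\<close> says exactly \<open>9q\<^sup>2 \<le> 4pt\<close>. The serial child
  is again balanced, \<open>(p\<^sup>2, b, b, b, 1 - p\<^sup>2 - 3b)\<close> with \<open>b = 2pq + q\<^sup>2\<close>, and its criterion
  \<open>9b\<^sup>2 \<le> 4p\<^sup>2(1 - p\<^sup>2 - 3b)\<close> is \<open>v \<le> p\<close> for \<open>v = p\<^sup>2 + 3b/2\<close>; since \<open>p - v = pt - 3q\<^sup>2/2\<close>, this
  follows from \<open>9q\<^sup>2 \<le> 4pt\<close>. Exchanging the roles of \<open>p\<close> and \<open>t\<close> turns the parallel
  child into the serial child and \<open>H\<close> into \<open>1 - H\<close>, which leaves \<open>Q\<close> unchanged.\<close>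

definition tec_flip :: "tec \<Rightarrow> tec" where
  "tec_flip W = (case W of (p,q,r,s,t) \<Rightarrow> (t,q,r,s,p))"

lemma is_TEC_tec_flip: "is_TEC W \<Longrightarrow> is_TEC (tec_flip W)"
  by (cases W) (auto simp: is_TEC_def tec_flip_def)

lemma balanced_tec_flip: "balanced W \<Longrightarrow> balanced (tec_flip W)"
  by (cases W) (auto simp: balanced_def tec_flip_def)

lemma tec_entropy_tec_flip: "is_TEC W \<Longrightarrow> tec_entropy (tec_flip W) = 1 - tec_entropy W"
  by (cases W) (auto simp: is_TEC_def tec_entropy_def tec_flip_def field_simps)

lemma quetelet_tec_flip: "is_TEC W \<Longrightarrow> quetelet (tec_flip W) = quetelet W"
  by (simp add: quetelet_def tec_entropy_tec_flip mult.commute)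
    (cases W, simp add: tec_edge_mass_def tec_flip_def)

lemma parallel_child_eq_flip_serial_child:
  "parallel_child W = tec_flip (serial_child (tec_flip W))"
  by (cases W) (simp add: parallel_child_def serial_child_def tec_flip_def Let_def algebra_simps)

lemma is_TEC_serial_child:
  assumes "is_TEC W"
  shows "is_TEC (serial_child W)"
proof -
  obtain p q r s t where W: "W = (p,q,r,s,t)" by (cases W) auto
  have nonneg: "p \<ge> 0" "q \<ge> 0" "r \<ge> 0" "s \<ge> 0" and "p + q + r + s \<le> 1"
    using assms by (auto simp: W is_TEC_def)
  then have "(p + q + r + s)\<^sup>2 \<le> 1"
    by (simp add: power_le_one)
  moreover have "p\<^sup>2 + (p*s + s*q + q*p) + (p*q + q*r + r*p) + (p*r + r*s + s*p)
      \<le> (p + q + r + s)\<^sup>2"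
    using nonneg by (simp add: power2_eq_square algebra_simps)
  ultimately show ?thesis
    using nonneg by (simp add: W is_TEC_def serial_child_def Let_def)
qed

lemma quetelet_balanced_le_2_iff:
  fixes p q t :: real
  assumes "p + 3*q + t = 1"
    and "0 < tec_entropy (p,q,q,q,t)" "tec_entropy (p,q,q,q,t) < 1"
  shows "quetelet (p,q,q,q,t) \<le> 2 \<longleftrightarrow> 9*q\<^sup>2 \<le> 4*p*t"
proof -
  define H where "H = 3*q/2 + t"
  have "0 < H" "H < 1"
    using assms(2,3) by (simp_all add: H_def tec_entropy_def)
  then have "quetelet (p,q,q,q,t) \<le> 2 \<longleftrightarrow> 3*q \<le> 2*(H*(1 - H))"
    by (simp add: quetelet_def tec_entropy_def tec_edge_mass_def H_def[symmetric]
        pos_divide_le_eq)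
  moreover have "2*(H*(1 - H)) - 3*q = 2*p*t - 9*q\<^sup>2/2"
  proof -
    have p: "p = 1 - 3*q - t"
      using assms(1) by linarith
    show ?thesis
      by (simp add: H_def p power2_eq_square algebra_simps)
  qed
  ultimately show ?thesis
    by linarith
qed

lemma serial_child_balanced:
  "serial_child (p,q,q,q,t) =
    (p\<^sup>2, 2*p*q + q\<^sup>2, 2*p*q + q\<^sup>2, 2*p*q + q\<^sup>2, 1 - p\<^sup>2 - 3*(2*p*q + q\<^sup>2))"
  by (simp add: serial_child_def Let_def power2_eq_square algebra_simps)

lemma serial_child_quetelet_le_2:
  assumes "is_TEC W" "balanced W"
    and "0 < tec_entropy W" "tec_entropy W < 1" "quetelet W \<le> 2"
  shows "0 < tec_entropy (serial_child W) \<and> tec_entropy (serial_child W) < 1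
    \<and> quetelet (serial_child W) \<le> 2"
proof -
  obtain p q t where W: "W = (p,q,q,q,t)"
    using assms(2) by (cases W) (auto simp: balanced_def)
  have nonneg: "p \<ge> 0" "q \<ge> 0" "t \<ge> 0" and sum: "p + 3*q + t = 1"
    using assms(1) by (auto simp: W is_TEC_def)
  have "9*q\<^sup>2 \<le> 4*p*t"
    using quetelet_balanced_le_2_iff[OF sum] assms(3-5) by (simp add: W)
  define b where "b = 2*p*q + q\<^sup>2"
  define v where "v = p\<^sup>2 + 3*b/2"
  have child: "serial_child W = (p\<^sup>2, b, b, b, 1 - p\<^sup>2 - 3*b)"
    by (simp add: W b_def serial_child_balanced)
  have entropy: "tec_entropy (serial_child W) = 1 - v"
    by (simp add: child tec_entropy_def v_def)
  have t: "t = 1 - p - 3*q"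
    using sum by linarith
  have "p - v = p*t - 3*q\<^sup>2/2"
    by (simp add: v_def b_def t power2_eq_square algebra_simps)
  then have "v \<le> p"
    using \<open>9*q\<^sup>2 \<le> 4*p*t\<close> zero_le_power2[of q] by linarith
  have "p < 1"
    using assms(3) nonneg sum by (simp add: W tec_entropy_def)
  have "0 < p \<or> 0 < q"
    using assms(4) nonneg sum by (auto simp: W tec_entropy_def)
  then have "0 < p\<^sup>2 + q\<^sup>2"
    by (auto intro: add_pos_nonneg add_nonneg_pos)
  moreover have "v = p\<^sup>2 + 3*(p*q) + 3*q\<^sup>2/2"
    by (simp add: v_def b_def field_simps)
  ultimately have "0 < v"
    using mult_nonneg_nonneg[OF nonneg(1,2)] zero_le_power2[of q] by linarith
  have "0 \<le> (p - v)*(p + v)"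
    using \<open>v \<le> p\<close> \<open>0 < v\<close> by simp
  also have "\<dots> = (4*p\<^sup>2*(1 - p\<^sup>2 - 3*b) - 9*b\<^sup>2)/4"
    by (simp add: v_def power2_eq_square algebra_simps)
  finally have "9*b\<^sup>2 \<le> 4*p\<^sup>2*(1 - p\<^sup>2 - 3*b)"
    by simp
  moreover have "0 < tec_entropy (serial_child W)" "tec_entropy (serial_child W) < 1"
    using \<open>v \<le> p\<close> \<open>p < 1\<close> \<open>0 < v\<close> by (simp_all add: entropy)
  ultimately show ?thesis
    using quetelet_balanced_le_2_iff[of "p\<^sup>2" b "1 - p\<^sup>2 - 3*b"] by (simp add: child)
qed

theorem mainTheorem9:
  fixes W :: tec
  assumes "is_TEC W"
    and "balanced W"
    and "0 < tec_entropy W" and "tec_entropy W < 1"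
    and "quetelet W \<le> 2"
  shows "0 < tec_entropy (serial_child W) \<and> tec_entropy (serial_child W) < 1
           \<and> quetelet (serial_child W) \<le> 2
         \<and> 0 < tec_entropy (parallel_child W) \<and> tec_entropy (parallel_child W) < 1
           \<and> quetelet (parallel_child W) \<le> 2"
proof -
  have flip: "is_TEC (tec_flip W)" "balanced (tec_flip W)"
    "0 < tec_entropy (tec_flip W)" "tec_entropy (tec_flip W) < 1"
    "quetelet (tec_flip W) \<le> 2"
    using assms by (simp_all add: is_TEC_tec_flip balanced_tec_flip tec_entropy_tec_flip
        quetelet_tec_flip)
  have "is_TEC (serial_child (tec_flip W))"
    using flip(1) by (rule is_TEC_serial_child)
  then show ?thesis
    using serial_child_quetelet_le_2[OF assms] serial_child_quetelet_le_2[OF flip]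
    by (simp add: parallel_child_eq_flip_serial_child tec_entropy_tec_flip quetelet_tec_flip)
qed

end
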